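(* The following implementation of the extended weak descriptor abstract data type is lock-free: in every execution in which processes take infinitely many steps, infinitely many of the descriptor operations CreateNew, ReadField, ReadImmutables, WriteField, CASField terminate. Implementation: for each descriptor type $T$ and process $p$ there is one shared object $D_{T,p}$ holding the immutable fields of type $T$ and a single word $mutables$ containing a sequence number $seq$ (initially $0$) and all mutable fields, read and CASed atomically as one word. A descriptor pointer is a pair $\langle q,s\rangle$. - $\mathrm{CreateNew}(T,v_1,\ldots)$ by $p$: $oldseq:=D_{T,p}.mutables.seq$; set the sequence number to $oldseq+1$; write every field with its value; set the sequence number to $oldseq+2$; return $\langle p, oldseq+2\rangle$. - $\mathrm{ReadField}(\langle q,s\rangle,f,dv)$: read field $f$ of $D_{T,q}$, then read $D_{T,q}.mutables.seq$; return $dv$ if it differs from $s$, else the value read. - $\mathrm{ReadImmutables}(\langle q,s\rangle)$: read all immutable fields of $D_{T,q}$, then the sequence number; return $\bot$ if it differs from $s$, else the values read. - $\mathrm{WriteField}(\langle q,s\rangle,f,v)$: repeat: $exp:=D_{T,q}.mutables$; if $exp.seq\ne s$ return; $new:=exp$ with $f$ set to $v$; if $\mathrm{CAS}(D_{T,q}.mutables,exp,new)$ succeeds return. - $\mathrm{CASField}(\langle q,s\rangle,f,fexp,fnew)$: repeat: $exp:=D_{T,q}.mutables$; if $exp.seq\ne s$ return $\bot$; if $exp.f\ne fexp$ return $exp.f$; $new:=exp$ with $f$ set to $fnew$; if $\mathrm{CAS}(D_{T,q}.mutables,exp,new)$ succeeds return.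
   Context: Asynchronous shared-memory system of processes; shared memory consists of base objects supporting read, write and compare-and-swap (CAS), each step being atomic. An execution is an alternating sequence of configurations and steps. A CAS$(x, exp, new)$ atomically changes $x$ to $new$ and succeeds if $x=exp$, and otherwise fails without changing $x$. Sequence numbers are unbounded. *)

theory Defs
  imports Main
begin

text \<open>
  Type parameters: 't descriptor types, 'p processes, 'i immutable field names,
  'm mutable field names, 'v field values.
  Shared memory:
   imem T p i  -- base object holding immutable field i of D_{T,p}
   mmem T p    -- the single word D_{T,p}.mutables = (seq, mutable fields)
  The fields of type T are given by imf T (immutable) and mf T (mutable).
\<close>

datatype ('p,'i,'v) result =
    RPtr 'p nat
  | RVal 'v
  | RImms "'i \<Rightarrow> 'v option"
  | RBot
  | RUnit

datatype ('t,'p,'i,'m,'v) pc =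
    Idle "('p,'i,'v) result option"
  | CN_ReadSeq 't "'i \<Rightarrow> 'v" "'m \<Rightarrow> 'v"
  \<comment> \<open>write the word with seq = oldseq+1 (local copy of mutables)\<close>
  | CN_SetSeq1 't "'i \<Rightarrow> 'v" "'m \<Rightarrow> 'v" nat "'m \<Rightarrow> 'v"
  | CN_WriteImm 't "'i \<Rightarrow> 'v" "'m \<Rightarrow> 'v" nat "'m \<Rightarrow> 'v" "'i list"
  | CN_WriteMut 't "'i \<Rightarrow> 'v" "'m \<Rightarrow> 'v" nat "'m \<Rightarrow> 'v" "'m list"
  | RF_ReadField 't 'p nat "'i + 'm" 'v
  | RF_ReadSeq 't 'p nat 'v 'v
  | RI_ReadImm 't 'p nat "'i list" "'i \<Rightarrow> 'v option"
  | WF_Read 't 'p nat 'm 'v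
  | WF_CAS 't 'p nat 'm 'v "nat \<times> ('m \<Rightarrow> 'v)"
  | CF_Read 't 'p nat 'm 'v 'v
  | CF_CAS 't 'p nat 'm 'v 'v "nat \<times> ('m \<Rightarrow> 'v)"

record ('t,'p,'i,'m,'v) conf =
  pcs  :: "'p \<Rightarrow> ('t,'p,'i,'m,'v) pc"
  imem :: "'t \<Rightarrow> 'p \<Rightarrow> 'i \<Rightarrow> 'v"
  mmem :: "'t \<Rightarrow> 'p \<Rightarrow> nat \<times> ('m \<Rightarrow> 'v)"

definition initial :: "('t,'p,'i,'m,'v) conf \<Rightarrow> bool" where
  "initial c \<longleftrightarrow> (\<forall>p. pcs c p = Idle None) \<and> (\<forall>T p. fst (mmem c T p) = 0)"

definition setpc :: "'p \<Rightarrow> ('t,'p,'i,'m,'v) pc \<Rightarrow> ('t,'p,'i,'m,'v) conf \<Rightarrow> ('t,'p,'i,'m,'v) conf" where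
  "setpc p x c = c\<lparr>pcs := (pcs c)(p := x)\<rparr>"

definition setm :: "'t \<Rightarrow> 'p \<Rightarrow> nat \<times> ('m \<Rightarrow> 'v) \<Rightarrow> ('t,'p,'i,'m,'v) conf \<Rightarrow> ('t,'p,'i,'m,'v) conf" where
  "setm T q w c = c\<lparr>mmem := (mmem c)(T := (mmem c T)(q := w))\<rparr>"

definition seti :: "'t \<Rightarrow> 'p \<Rightarrow> 'i \<Rightarrow> 'v \<Rightarrow> ('t,'p,'i,'m,'v) conf \<Rightarrow> ('t,'p,'i,'m,'v) conf" where
  "seti T q i v c = c\<lparr>imem := (imem c)(T := (imem c T)(q := (imem c T q)(i := v)))\<rparr>"

text \<open>One atomic step of process p (at most one shared-memory access per step).\<close>
inductive step :: "('t \<Rightarrow> 'i list) \<Rightarrow> ('t \<Rightarrow> 'm list) \<Rightarrow> 'p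
                   \<Rightarrow> ('t,'p,'i,'m,'v) conf \<Rightarrow> ('t,'p,'i,'m,'v) conf \<Rightarrow> bool"
  for imf :: "'t \<Rightarrow> 'i list" and mf :: "'t \<Rightarrow> 'm list" where
  inv_CN: "pcs c p = Idle r \<Longrightarrow> step imf mf p c (setpc p (CN_ReadSeq T iv mv) c)"
| inv_RF: "pcs c p = Idle r \<Longrightarrow> f \<in> Inl ` set (imf T) \<union> Inr ` set (mf T) \<Longrightarrow>
           step imf mf p c (setpc p (RF_ReadField T q s f dv) c)"
| inv_RI: "pcs c p = Idle r \<Longrightarrow> step imf mf p c (setpc p (RI_ReadImm T q s (imf T) Map.empty) c)"
| inv_WF: "pcs c p = Idle r \<Longrightarrow> f \<in> set (mf T) \<Longrightarrow> step imf mf p c (setpc p (WF_Read T q s f v) c)"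
| inv_CF: "pcs c p = Idle r \<Longrightarrow> f \<in> set (mf T) \<Longrightarrow>
           step imf mf p c (setpc p (CF_Read T q s f fe fn) c)"
| cn_read: "pcs c p = CN_ReadSeq T iv mv \<Longrightarrow>
           step imf mf p c (setpc p (CN_SetSeq1 T iv mv (fst (mmem c T p)) (snd (mmem c T p))) c)"
| cn_seq1: "pcs c p = CN_SetSeq1 T iv mv os loc \<Longrightarrow>
           step imf mf p c (setpc p (CN_WriteImm T iv mv os loc (imf T)) (setm T p (os + 1, loc) c))"
| cn_imm:  "pcs c p = CN_WriteImm T iv mv os loc (i # is) \<Longrightarrow>
           step imf mf p c (setpc p (CN_WriteImm T iv mv os loc is) (seti T p i (iv i) c))"
| cn_immdone: "pcs c p = CN_WriteImm T iv mv os loc [] \<Longrightarrow>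
           step imf mf p c (setpc p (CN_WriteMut T iv mv os loc (mf T)) c)"
| cn_mut:  "pcs c p = CN_WriteMut T iv mv os loc (f # fs) \<Longrightarrow>
           step imf mf p c (setpc p (CN_WriteMut T iv mv os (loc(f := mv f)) fs)
                                     (setm T p (os + 1, loc(f := mv f)) c))"
| cn_seq2: "pcs c p = CN_WriteMut T iv mv os loc [] \<Longrightarrow>
           step imf mf p c (setpc p (Idle (Some (RPtr p (os + 2)))) (setm T p (os + 2, loc) c))"
| rf_imm:  "pcs c p = RF_ReadField T q s (Inl i) dv \<Longrightarrow>
           step imf mf p c (setpc p (RF_ReadSeq T q s dv (imem c T q i)) c)"
| rf_mut:  "pcs c p = RF_ReadField T q s (Inr m) dv \<Longrightarrow>
           step imf mf p c (setpc p (RF_ReadSeq T q s dv (snd (mmem c T q) m)) c)"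
| rf_seq:  "pcs c p = RF_ReadSeq T q s dv v \<Longrightarrow>
           step imf mf p c (setpc p (Idle (Some (RVal (if fst (mmem c T q) \<noteq> s then dv else v)))) c)"
| ri_imm:  "pcs c p = RI_ReadImm T q s (i # is) acc \<Longrightarrow>
           step imf mf p c (setpc p (RI_ReadImm T q s is (acc(i \<mapsto> imem c T q i))) c)"
| ri_seq:  "pcs c p = RI_ReadImm T q s [] acc \<Longrightarrow>
           step imf mf p c (setpc p (Idle (Some (if fst (mmem c T q) \<noteq> s then RBot else RImms acc))) c)"
| wf_read_ret: "pcs c p = WF_Read T q s f v \<Longrightarrow> fst (mmem c T q) \<noteq> s \<Longrightarrow>
           step imf mf p c (setpc p (Idle (Some RUnit)) c)"
| wf_read: "pcs c p = WF_Read T q s f v \<Longrightarrow> fst (mmem c T q) = s \<Longrightarrow>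
           step imf mf p c (setpc p (WF_CAS T q s f v (mmem c T q)) c)"
| wf_cas_ok: "pcs c p = WF_CAS T q s f v e \<Longrightarrow> mmem c T q = e \<Longrightarrow>
           step imf mf p c (setpc p (Idle (Some RUnit)) (setm T q (fst e, (snd e)(f := v)) c))"
| wf_cas_fail: "pcs c p = WF_CAS T q s f v e \<Longrightarrow> mmem c T q \<noteq> e \<Longrightarrow>
           step imf mf p c (setpc p (WF_Read T q s f v) c)"
| cf_read_bot: "pcs c p = CF_Read T q s f fe fn \<Longrightarrow> fst (mmem c T q) \<noteq> s \<Longrightarrow>
           step imf mf p c (setpc p (Idle (Some RBot)) c)"
| cf_read_ne: "pcs c p = CF_Read T q s f fe fn \<Longrightarrow> fst (mmem c T q) = s \<Longrightarrow>
           snd (mmem c T q) f \<noteq> fe \<Longrightarrow>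
           step imf mf p c (setpc p (Idle (Some (RVal (snd (mmem c T q) f)))) c)"
| cf_read: "pcs c p = CF_Read T q s f fe fn \<Longrightarrow> fst (mmem c T q) = s \<Longrightarrow>
           snd (mmem c T q) f = fe \<Longrightarrow>
           step imf mf p c (setpc p (CF_CAS T q s f fe fn (mmem c T q)) c)"
| cf_cas_ok: "pcs c p = CF_CAS T q s f fe fn e \<Longrightarrow> mmem c T q = e \<Longrightarrow>
           step imf mf p c (setpc p (Idle (Some (RVal fe))) (setm T q (fst e, (snd e)(f := fn)) c))"
| cf_cas_fail: "pcs c p = CF_CAS T q s f fe fn e \<Longrightarrow> mmem c T q \<noteq> e \<Longrightarrow>
           step imf mf p c (setpc p (CF_Read T q s f fe fn) c)"

definition is_idle :: "('t,'p,'i,'m,'v) pc \<Rightarrow> bool" where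
  "is_idle x \<longleftrightarrow> (\<exists>r. x = Idle r)"

definition completes :: "'p \<Rightarrow> ('t,'p,'i,'m,'v) conf \<Rightarrow> ('t,'p,'i,'m,'v) conf \<Rightarrow> bool" where
  "completes p c c' \<longleftrightarrow> \<not> is_idle (pcs c p) \<and> is_idle (pcs c' p)"

end

theory Submission
  imports Defs "HOL-Library.Infinite_Set"
begin

text \<open>
  Every step that does not complete an operation decreases, lexicographically,
  the triple (number of idle processes, pending writes of the mutables words
  by CreateNew, remaining other steps). An invocation turns an idle process busy.
  The mutables words change only through CreateNew writes, which lower the second
  component, and through successful CASes, which complete. Every other step is
  local to its process and lowers the third component: a CAS that is bound to
  fail is charged three steps (the failing CAS, the re-read and the next CAS),
  one that is bound to succeed only one. Since the lexicographic order is
  well founded, only finitely many consecutive steps can avoid completing;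
  nothing about the initial configuration is needed.
\<close>

lemma INFM_if_descending_otherwise:
  assumes "wf R" and "\<And>n. P n \<or> (f (Suc n), f n) \<in> R"
  shows "\<exists>\<^sub>\<infinity>n. P n"
proof (rule ccontr)
  assume "\<not> (\<exists>\<^sub>\<infinity>n. P n)"
  then obtain N where "\<forall>n\<ge>N. \<not> P n"
    unfolding INFM_nat_le by auto
  with assms(2) have "(f (Suc (N + i)), f (N + i)) \<in> R" for i
    by (metis le_add1)
  then show False
    using wf_no_infinite_down_chainE[OF assms(1), of "\<lambda>i. f (N + i)"] by auto
qed

lemma sum_UNIV_fun_upd:
  fixes g :: "'a \<Rightarrow> 'b::comm_monoid_add" and h :: "'p::finite \<Rightarrow> 'a"
  shows "(\<Sum>q\<in>UNIV. g ((h(p := x)) q)) + g (h p) = (\<Sum>q\<in>UNIV. g (h q)) + g x"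
  by (simp add: sum.remove[of UNIV p] add_ac)

fun pending_mutables_writes :: "('t \<Rightarrow> 'm list) \<Rightarrow> ('t,'p,'i,'m,'v) pc \<Rightarrow> nat" where
  "pending_mutables_writes mf (CN_ReadSeq T iv mv) = Suc (length (mf T))"
| "pending_mutables_writes mf (CN_SetSeq1 T iv mv os loc) = Suc (length (mf T))"
| "pending_mutables_writes mf (CN_WriteImm T iv mv os loc is) = length (mf T)"
| "pending_mutables_writes mf (CN_WriteMut T iv mv os loc fs) = length fs"
| "pending_mutables_writes mf _ = 0"

fun pending_other_steps :: "('t \<Rightarrow> 'p \<Rightarrow> nat \<times> ('m \<Rightarrow> 'v)) \<Rightarrow> ('t,'p,'i,'m,'v) pc \<Rightarrow> nat" where
  "pending_other_steps M (CN_ReadSeq T iv mv) = 1"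
| "pending_other_steps M (CN_WriteImm T iv mv os loc is) = Suc (length is)"
| "pending_other_steps M (RF_ReadField T q s f dv) = 2"
| "pending_other_steps M (RF_ReadSeq T q s dv v) = 1"
| "pending_other_steps M (RI_ReadImm T q s is acc) = Suc (length is)"
| "pending_other_steps M (WF_Read T q s f v) = 2"
| "pending_other_steps M (WF_CAS T q s f v e) = (if M T q = e then 1 else 3)"
| "pending_other_steps M (CF_Read T q s f fe fn) = 2"
| "pending_other_steps M (CF_CAS T q s f fe fn e) = (if M T q = e then 1 else 3)"
| "pending_other_steps M _ = 0"

definition progress :: "('t \<Rightarrow> 'm list) \<Rightarrow> ('t,'p::finite,'i,'m,'v) conf \<Rightarrow> nat \<times> nat \<times> nat" where
  "progress mf c =
    (card {q. is_idle (pcs c q)},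
     \<Sum>q\<in>UNIV. pending_mutables_writes mf (pcs c q),
     \<Sum>q\<in>UNIV. pending_other_steps (mmem c) (pcs c q))"

abbreviation progress_order :: "((nat \<times> nat \<times> nat) \<times> (nat \<times> nat \<times> nat)) set" where
  "progress_order \<equiv> less_than <*lex*> less_than <*lex*> less_than"

lemma progress_decreases_on_invocation:
  fixes c c' :: "('t,'p::finite,'i,'m,'v) conf"
  assumes "pcs c' = (pcs c)(p := x)" "is_idle (pcs c p)" "\<not> is_idle x"
  shows "(progress mf c', progress mf c) \<in> progress_order"
proof -
  have "{q. is_idle (pcs c' q)} = {q. is_idle (pcs c q)} - {p}"
    using assms by auto
  then have "card {q. is_idle (pcs c' q)} < card {q. is_idle (pcs c q)}"
    using assms(2) by (metis card_Diff1_less finite mem_Collect_eq)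
  then show ?thesis
    unfolding progress_def by simp
qed

lemma progress_decreases_on_write:
  fixes c c' :: "('t,'p::finite,'i,'m,'v) conf"
  assumes "pcs c' = (pcs c)(p := x)" "\<not> is_idle (pcs c p)" "\<not> is_idle x"
    and "pending_mutables_writes mf x < pending_mutables_writes mf (pcs c p)"
  shows "(progress mf c', progress mf c) \<in> progress_order"
proof -
  have "{q. is_idle (pcs c' q)} = {q. is_idle (pcs c q)}"
    using assms by auto
  moreover have "(\<Sum>q\<in>UNIV. pending_mutables_writes mf (pcs c' q))
      < (\<Sum>q\<in>UNIV. pending_mutables_writes mf (pcs c q))"
    using sum_UNIV_fun_upd[of "pending_mutables_writes mf" "pcs c" p x] assms by simp
  ultimately show ?thesis
    unfolding progress_def by simp
qed

lemma progress_decreases_on_local_step: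
  fixes c c' :: "('t,'p::finite,'i,'m,'v) conf"
  assumes "pcs c' = (pcs c)(p := x)" "mmem c' = mmem c" "\<not> is_idle (pcs c p)" "\<not> is_idle x"
    and "pending_mutables_writes mf x = pending_mutables_writes mf (pcs c p)"
    and "pending_other_steps (mmem c) x < pending_other_steps (mmem c) (pcs c p)"
  shows "(progress mf c', progress mf c) \<in> progress_order"
proof -
  have "{q. is_idle (pcs c' q)} = {q. is_idle (pcs c q)}"
    using assms by auto
  moreover have "(\<Sum>q\<in>UNIV. pending_mutables_writes mf (pcs c' q))
      = (\<Sum>q\<in>UNIV. pending_mutables_writes mf (pcs c q))"
    using sum_UNIV_fun_upd[of "pending_mutables_writes mf" "pcs c" p x] assms by simp
  moreover have "(\<Sum>q\<in>UNIV. pending_other_steps (mmem c') (pcs c' q))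
      < (\<Sum>q\<in>UNIV. pending_other_steps (mmem c) (pcs c q))"
    using sum_UNIV_fun_upd[of "pending_other_steps (mmem c)" "pcs c" p x] assms by simp
  ultimately show ?thesis
    unfolding progress_def by simp
qed

lemma progress_decreases_unless_completes:
  fixes c c' :: "('t,'p::finite,'i,'m,'v) conf"
  assumes "step imf mf p c c'" and "\<not> completes p c c'"
  shows "(progress mf c', progress mf c) \<in> progress_order"
  using assms
  by cases
    (fastforce simp: completes_def setpc_def setm_def seti_def is_idle_def
      intro: progress_decreases_on_invocation[where p = p]
             progress_decreases_on_write[where p = p]
             progress_decreases_on_local_step[where p = p])+

theorem mainTheorem2:
  fixes imf :: "'t \<Rightarrow> 'i list" and mf :: "'t \<Rightarrow> 'm list"
    and C :: "nat \<Rightarrow> ('t, 'p::finite, 'i, 'm, 'v) conf" and sched :: "nat \<Rightarrow> 'p"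
  assumes "initial (C 0)"
    and "\<forall>n. step imf mf (sched n) (C n) (C (Suc n))"
  shows "\<exists>\<^sub>\<infinity>n. completes (sched n) (C n) (C (Suc n))"
proof (rule INFM_if_descending_otherwise)
  show "wf progress_order"
    by auto
  show "completes (sched n) (C n) (C (Suc n))
      \<or> (progress mf (C (Suc n)), progress mf (C n)) \<in> progress_order" for n
    using assms(2) progress_decreases_unless_completes[of imf] by blast
qed

end
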